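(* Let $S$ be a numerical semigroup and $m\in\mathbb{N}$, and suppose the set of gaps $\mathrm{H}(S)$ is equidistributed modulo $m$. Then $m\in S$ if and only if $\mathrm{g}(S)=0$.
   Context: A numerical semigroup is a submonoid $S$ of $(\mathbb{N}_0,+)$ with finite complement; $\mathrm{H}(S)=\mathbb{N}_0\setminus S$ is its set of gaps and $\mathrm{g}(S)=\#\mathrm{H}(S)$ its genus. A finite set $B\subset\mathbb{Z}$ is equidistributed modulo $m$ if for all $r_1,r_2\in\{1,\dots,m\}$ the number of elements of $B$ congruent to $r_1$ modulo $m$ equals the number of elements of $B$ congruent to $r_2$ modulo $m$. *)

theory Defs
  imports Main
begin

definition numerical_semigroup :: "nat set \<Rightarrow> bool" where
  "numerical_semigroup S \<longleftrightarrow>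
     0 \<in> S \<and> (\<forall>a\<in>S. \<forall>b\<in>S. a + b \<in> S) \<and> finite (UNIV - S)"

definition gaps :: "nat set \<Rightarrow> nat set" where
  "gaps S = UNIV - S"

definition genus :: "nat set \<Rightarrow> nat" where
  "genus S = card (gaps S)"

definition equidistributed_mod :: "int set \<Rightarrow> int \<Rightarrow> bool" where
  "equidistributed_mod B m \<longleftrightarrow> finite B \<and>
     (\<forall>r1\<in>{1..m}. \<forall>r2\<in>{1..m}.
        card {b\<in>B. b mod m = r1 mod m} = card {b\<in>B. b mod m = r2 mod m})"

end

theory Submission
  imports Defs
begin

text \<open>If \<open>m \<in> S\<close>, every multiple of \<open>m\<close> lies in \<open>S\<close>, so the residue class of \<open>0\<close>
  modulo \<open>m\<close> contains no gap. Equidistribution then forces every residue class of gaps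
  to be empty, i.e. \<open>S\<close> has no gaps at all.\<close>

lemma numerical_semigroup_mult_mem:
  assumes "numerical_semigroup S" "m \<in> S"
  shows "k * m \<in> S"
  using assms by (induction k) (auto simp: numerical_semigroup_def)

lemma gaps_not_dvd:
  assumes "numerical_semigroup S" "m \<in> S" "x \<in> gaps S"
  shows "\<not> m dvd x"
  using assms numerical_semigroup_mult_mem[OF assms(1,2)]
  by (auto simp: gaps_def mult.commute elim!: dvdE)

lemma genus_eq_0_iff:
  assumes "numerical_semigroup S"
  shows "genus S = 0 \<longleftrightarrow> gaps S = {}"
  using assms by (simp add: genus_def gaps_def numerical_semigroup_def)

lemma equidistributed_mod_empty:
  fixes B :: "int set" and m :: int
  assumes "equidistributed_mod B m" "m \<ge> 1" "\<forall>b\<in>B. \<not> m dvd b"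
  shows "B = {}"
proof (rule ccontr)
  assume "B \<noteq> {}"
  then obtain b where b: "b \<in> B" by auto
  define r where "r = (b - 1) mod m + 1"
  have "0 \<le> (b - 1) mod m" "(b - 1) mod m < m"
    using \<open>m \<ge> 1\<close> by simp_all
  then have r_range: "r \<in> {1..m}"
    unfolding r_def by simp
  have r_mod: "r mod m = b mod m"
    unfolding r_def by (simp add: mod_add_left_eq)
  have "m \<in> {1..m}"
    using \<open>m \<ge> 1\<close> by simp
  with r_range have "card {c\<in>B. c mod m = r mod m} = card {c\<in>B. c mod m = m mod m}"
    using assms(1) unfolding equidistributed_mod_def by blast
  also have "{c\<in>B. c mod m = m mod m} = {}"
    using assms(3) by (auto simp: mod_eq_0_iff_dvd)
  finally have "{c\<in>B. c mod m = r mod m} = {}"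
    using assms(1) by (simp add: equidistributed_mod_def)
  with b r_mod show False by auto
qed

theorem mainTheorem2:
  fixes S :: "nat set" and m :: nat
  assumes "numerical_semigroup S"
    and "m \<ge> 1"
    and "equidistributed_mod (int ` gaps S) (int m)"
  shows "m \<in> S \<longleftrightarrow> genus S = 0"
proof
  assume "m \<in> S"
  then have "\<forall>b\<in>int ` gaps S. \<not> int m dvd b"
    using gaps_not_dvd[OF assms(1)] by auto
  then have "int ` gaps S = {}"
    using equidistributed_mod_empty[OF assms(3)] assms(2) by simp
  then show "genus S = 0"
    using genus_eq_0_iff[OF assms(1)] by simp
next
  assume "genus S = 0"
  then show "m \<in> S"
    using genus_eq_0_iff[OF assms(1)] by (auto simp: gaps_def)
qed

end
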